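(* Let $\langle \mathscr{A} \mid \mathscr{R} \rangle$ be a $C(2)$ monoid presentation and let $u$ be a relation word. Then for any $v \in \mathscr{A}^*$ we have $u \equiv_\mathscr{R} v$ if and only if there exist $n \geq 1$ and words $u = u_1, u_2, \dots, u_n = v$ such that for each $1 \leq i < n$ either $(u_i, u_{i+1}) \in \mathscr{R}$ or $(u_{i+1}, u_i) \in \mathscr{R}$.
   Context: A monoid presentation $\langle \mathscr{A} \mid \mathscr{R} \rangle$ consists of an alphabet $\mathscr{A}$ and a set $\mathscr{R} \subseteq \mathscr{A}^* \times \mathscr{A}^*$ of relations; $\equiv_\mathscr{R}$ denotes the smallest congruence on the free monoid $\mathscr{A}^*$ containing $\mathscr{R}$, and the monoid presented is $\mathscr{A}^*/\equiv_\mathscr{R}$. A relation word is a word occurring as one side of a relation in $\mathscr{R}$. A piece is a word which occurs as a factor of two distinct relation words, or in two different (possibly overlapping) positions within one relation word; by convention the empty word is always a piece. For a positive integer $n$, the presentation is $C(n)$ if no relation word can be written as a product of strictly fewer than $n$ pieces. *)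

theory Defs
  imports Main
begin

definition is_congruence :: "('a list \<times> 'a list) set \<Rightarrow> bool" where
  "is_congruence c \<longleftrightarrow> equiv UNIV c \<and>
     (\<forall>x y p q. (x, y) \<in> c \<longrightarrow> (p @ x @ q, p @ y @ q) \<in> c)"

definition cong_gen :: "('a list \<times> 'a list) set \<Rightarrow> ('a list \<times> 'a list) set" where
  "cong_gen R = \<Inter> {c. is_congruence c \<and> R \<subseteq> c}"

definition rel_words :: "('a list \<times> 'a list) set \<Rightarrow> 'a list set" where
  "rel_words R = fst ` R \<union> snd ` R"

definition occurs_at :: "'a list \<Rightarrow> 'a list \<Rightarrow> nat \<Rightarrow> bool" where
  "occurs_at x w i \<longleftrightarrow> i + length x \<le> length w \<and> take (length x) (drop i w) = x"

definition piece :: "('a list \<times> 'a list) set \<Rightarrow> 'a list \<Rightarrow> bool" where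
  "piece R x \<longleftrightarrow> x = [] \<or>
     (\<exists>w1 w2 i j. w1 \<in> rel_words R \<and> w2 \<in> rel_words R \<and>
        occurs_at x w1 i \<and> occurs_at x w2 j \<and> (w1 \<noteq> w2 \<or> i \<noteq> j))"

definition C_cond :: "nat \<Rightarrow> ('a list \<times> 'a list) set \<Rightarrow> bool" where
  "C_cond n R \<longleftrightarrow> (\<forall>w \<in> rel_words R. \<forall>ps.
     (\<forall>p \<in> set ps. piece R p) \<and> concat ps = w \<longrightarrow> n \<le> length ps)"

end

theory Submission
  imports Defs
begin

text \<open>The congruence generated by \<open>R\<close> is the reflexive-transitive closure of the one-step rewrites
  \<open>p x q \<rightarrow> p y q\<close> with \<open>(x, y) \<in> R \<union> R\<inverse>\<close>. If the word being rewritten is itself a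
  relation word, the relation word \<open>x\<close> occurring in it cannot be a proper factor: otherwise
  it would occur at two different places in relation words, hence be a piece, and a single
  piece would be a factorisation of \<open>x\<close> of length 1, contradicting C(2). So \<open>p\<close> and \<open>q\<close>
  are empty, the rewrite is an application of a relation, and its result is again a relation
  word. Induction along a rewriting sequence starting at a relation word gives the claim.\<close>

definition rewrite_step :: "('a list \<times> 'a list) set \<Rightarrow> ('a list \<times> 'a list) set" where
  "rewrite_step R = {(p @ x @ q, p @ y @ q) | p x y q. (x, y) \<in> R \<union> R\<inverse>}"

lemma rewrite_step_sym: "sym (rewrite_step R)"
  unfolding rewrite_step_def sym_def by blast

lemma symmetric_closure_subset_rewrite_step: "R \<union> R\<inverse> \<subseteq> rewrite_step R"
proof
  fix z assume "z \<in> R \<union> R\<inverse>"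
  then obtain x y where "z = ([] @ x @ [], [] @ y @ [])" and "(x, y) \<in> R \<union> R\<inverse>"
    by (cases z) simp
  then show "z \<in> rewrite_step R"
    unfolding rewrite_step_def by blast
qed

lemma rewrite_step_context:
  assumes "(x, y) \<in> rewrite_step R"
  shows "(p @ x @ q, p @ y @ q) \<in> rewrite_step R"
proof -
  from assms obtain p' x' y' q' where "x = p' @ x' @ q'" "y = p' @ y' @ q'"
    and rel: "(x', y') \<in> R \<union> R\<inverse>"
    unfolding rewrite_step_def by blast
  then have "p @ x @ q = (p @ p') @ x' @ (q' @ q)" "p @ y @ q = (p @ p') @ y' @ (q' @ q)"
    by simp_all
  with rel show ?thesis
    unfolding rewrite_step_def by blast
qed

lemma rtrancl_rewrite_step_context:
  "(x, y) \<in> (rewrite_step R)\<^sup>* \<Longrightarrow> (p @ x @ q, p @ y @ q) \<in> (rewrite_step R)\<^sup>*"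
  by (induction rule: rtrancl_induct)
    (auto intro: rtrancl_into_rtrancl rewrite_step_context)

lemma is_congruence_rtrancl_rewrite_step: "is_congruence ((rewrite_step R)\<^sup>*)"
  unfolding is_congruence_def equiv_def
  using refl_rtrancl sym_rtrancl[OF rewrite_step_sym] trans_rtrancl rtrancl_rewrite_step_context
  by auto

lemma rewrite_step_subset_congruence:
  assumes "is_congruence c" and "R \<subseteq> c"
  shows "rewrite_step R \<subseteq> c"
proof
  fix z assume "z \<in> rewrite_step R"
  then obtain p x y q where z: "z = (p @ x @ q, p @ y @ q)" and "(x, y) \<in> R \<union> R\<inverse>"
    unfolding rewrite_step_def by blast
  then have "(x, y) \<in> c"
    using assms unfolding is_congruence_def equiv_def sym_def by blast
  with assms(1) show "z \<in> c"
    unfolding z is_congruence_def by blast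
qed

lemma rtrancl_equiv_eq:
  assumes "equiv UNIV c"
  shows "c\<^sup>* = c"
proof -
  from assms have "trans c" and "Id \<subseteq> c"
    unfolding equiv_def refl_on_def by auto
  then show ?thesis
    by (simp add: rtrancl_trancl_reflcl trancl_id Un_absorb2)
qed

lemma cong_gen_eq_rtrancl_rewrite_step: "cong_gen R = (rewrite_step R)\<^sup>*"
proof
  have "R \<subseteq> (rewrite_step R)\<^sup>*"
    using symmetric_closure_subset_rewrite_step by blast
  with is_congruence_rtrancl_rewrite_step show "cong_gen R \<subseteq> (rewrite_step R)\<^sup>*"
    unfolding cong_gen_def by (intro Inter_lower) simp
  show "(rewrite_step R)\<^sup>* \<subseteq> cong_gen R"
    unfolding cong_gen_def
  proof (rule Inter_greatest)
    fix c assume "c \<in> {c. is_congruence c \<and> R \<subseteq> c}"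
    then have "is_congruence c" and "R \<subseteq> c" by simp_all
    then have "rewrite_step R \<subseteq> c" and "c\<^sup>* = c"
      using rewrite_step_subset_congruence rtrancl_equiv_eq
      unfolding is_congruence_def by blast+
    then show "(rewrite_step R)\<^sup>* \<subseteq> c"
      using rtrancl_mono by blast
  qed
qed

lemma C_cond_rel_word_not_piece:
  assumes "C_cond n R" and "2 \<le> n" and "w \<in> rel_words R"
  shows "\<not> piece R w"
proof
  assume "piece R w"
  then have "n \<le> length [w]"
    using assms(1,3) unfolding C_cond_def
    by (metis concat.simps append_Nil2 set_ConsD empty_iff list.set(1))
  with assms(2) show False by simp
qed

lemma piece_if_proper_factor_of_rel_word:
  assumes "x \<in> rel_words R" and "w \<in> rel_words R" and "w = p @ x @ q"
    and "p \<noteq> [] \<or> q \<noteq> []"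
  shows "piece R x"
  unfolding piece_def
proof (rule disjI2, intro exI conjI)
  show "x \<in> rel_words R" by fact
  show "w \<in> rel_words R" by fact
  show "occurs_at x x 0"
    unfolding occurs_at_def by simp
  show "occurs_at x w (length p)"
    unfolding occurs_at_def assms(3) by simp
  show "x \<noteq> w \<or> 0 \<noteq> length p"
    using assms(3,4) by auto
qed

lemma C2_rel_word_factor_of_rel_word:
  assumes "C_cond 2 R" and "x \<in> rel_words R" and "w \<in> rel_words R" and "w = p @ x @ q"
  shows "p = [] \<and> q = []"
  using piece_if_proper_factor_of_rel_word[OF assms(2-4)]
    C_cond_rel_word_not_piece[OF assms(1) _ assms(2)]
  by blast

lemma rel_words_symmetric_closure: "(x, y) \<in> R \<union> R\<inverse> \<Longrightarrow> x \<in> rel_words R \<and> y \<in> rel_words R"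
  unfolding rel_words_def by force

lemma C2_rewrite_step_of_rel_word:
  assumes "C_cond 2 R" and "w \<in> rel_words R" and "(w, w') \<in> rewrite_step R"
  shows "(w, w') \<in> R \<union> R\<inverse>"
proof -
  from assms(3) obtain p x y q where w: "w = p @ x @ q" "w' = p @ y @ q"
    and rel: "(x, y) \<in> R \<union> R\<inverse>"
    unfolding rewrite_step_def by blast
  have "p = [] \<and> q = []"
    using C2_rel_word_factor_of_rel_word[OF assms(1) _ assms(2) w(1)]
      rel_words_symmetric_closure[OF rel]
    by blast
  with w rel show ?thesis by simp
qed

lemma C2_rtrancl_rewrite_step_of_rel_word:
  assumes "C_cond 2 R" and "u \<in> rel_words R"
  shows "(u, v) \<in> (rewrite_step R)\<^sup>* \<longleftrightarrow> (u, v) \<in> (R \<union> R\<inverse>)\<^sup>*"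
proof
  assume "(u, v) \<in> (rewrite_step R)\<^sup>*"
  then show "(u, v) \<in> (R \<union> R\<inverse>)\<^sup>*"
  proof (induction rule: rtrancl_induct)
    case (step w w')
    have "w \<in> rel_words R"
      using step.IH assms(2) by (cases rule: rtranclE) (force simp: rel_words_def)+
    then have "(w, w') \<in> R \<union> R\<inverse>"
      using assms(1) step.hyps(2) C2_rewrite_step_of_rel_word by blast
    with step.IH show ?case by (rule rtrancl_into_rtrancl)
  qed simp
next
  show "(u, v) \<in> (R \<union> R\<inverse>)\<^sup>* \<Longrightarrow> (u, v) \<in> (rewrite_step R)\<^sup>*"
    using rtrancl_mono[OF symmetric_closure_subset_rewrite_step] by blast
qed

lemma rtrancl_iff_chain:
  "(a, b) \<in> Q\<^sup>* \<longleftrightarrow> (\<exists>us. length us \<ge> 1 \<and> hd us = a \<and> last us = b \<and>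
     (\<forall>i. Suc i < length us \<longrightarrow> (us ! i, us ! Suc i) \<in> Q))"
  (is "_ \<longleftrightarrow> (\<exists>us. ?chain a b us)")
proof
  assume "(a, b) \<in> Q\<^sup>*"
  then show "\<exists>us. ?chain a b us"
  proof (induction rule: rtrancl_induct)
    case base
    show ?case by (rule exI[of _ "[a]"]) simp
  next
    case (step b c)
    then obtain us where us: "?chain a b us" by blast
    then have "us \<noteq> []" by auto
    with us have "?chain a c (us @ [c])"
      using step.hyps(2)
      by (auto simp: nth_append last_conv_nth less_Suc_eq) (metis diff_Suc_1 One_nat_def)
    then show ?case by blast
  qed
next
  assume "\<exists>us. ?chain a b us"
  then obtain us where "?chain a b us" by blast
  then show "(a, b) \<in> Q\<^sup>*"
  proof (induction us arbitrary: a)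
    case (Cons x us)
    show ?case
    proof (cases us)
      case (Cons y ys)
      have "(x, y) \<in> Q" and "?chain y b us"
        using Cons.prems \<open>us = y # ys\<close> by (auto simp del: nth_Cons_Suc)
      with Cons.IH show ?thesis
        using Cons.prems by (auto intro: converse_rtrancl_into_rtrancl)
    qed (use Cons.prems in auto)
  qed simp
qed

theorem proposition3:
  fixes R :: "('a list \<times> 'a list) set" and u v :: "'a list"
  assumes "C_cond 2 R" and "u \<in> rel_words R"
  shows "(u, v) \<in> cong_gen R \<longleftrightarrow>
    (\<exists>us. length us \<ge> 1 \<and> hd us = u \<and> last us = v \<and>
       (\<forall>i. Suc i < length us \<longrightarrow>
          (us ! i, us ! Suc i) \<in> R \<or> (us ! Suc i, us ! i) \<in> R))"
proof -
  have "(u, v) \<in> cong_gen R \<longleftrightarrow> (u, v) \<in> (R \<union> R\<inverse>)\<^sup>*"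
    using C2_rtrancl_rewrite_step_of_rel_word[OF assms] cong_gen_eq_rtrancl_rewrite_step by blast
  then show ?thesis
    by (simp add: rtrancl_iff_chain)
qed

end
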